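(* If a shift space $X\subseteq\mathscr{A}^\infty$ has the $\bar d$-shadowing property and $\sigma(X)=X$, then $X$ is chain mixing.
   Context: Shift spaces are nonempty closed shift-invariant subsets of $\mathscr{A}^\infty=\mathscr{A}^{\mathbb N_0}$ ($\mathscr{A}$ finite, $\sigma$ the left shift); $\mathcal L(X)$, $\mathcal L_n(X)$ denote the words (of length $n$) appearing in $X$. $\bar d(x,y)=\limsup_{n\to\infty}\frac1n|\{0\le j<n:x_j\ne y_j\}|$. $X$ has the $\bar d$-shadowing property if for every $\varepsilon>0$ there is $N$ such that for every sequence $(w^{(j)})_{j\ge1}$ in $\mathcal L(X)$ with $|w^{(j)}|\ge N$ there is $x'\in X$ with $\bar d(w^{(1)}w^{(2)}\cdots,x')<\varepsilon$. The $n$-th Markov approximation $X^M_n$ is the set of $x\in\mathscr{A}^\infty$ all of whose subwords of length $n+1$ are in $\mathcal L_{n+1}(X)$. $X$ is chain mixing if $X^M_n$ is topologically mixing for all but finitely many $n$ (topologically mixing: for all $u,w\in\mathcal L$ there is $N$ such that for each $n\ge N$ some $v$ with $|v|=n$ has $uvw\in\mathcal L$). *)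

theory Defs
  imports "HOL-Analysis.Analysis"
begin

definition shift :: "(nat \<Rightarrow> 'a) \<Rightarrow> (nat \<Rightarrow> 'a)" where
  "shift x = (\<lambda>i. x (Suc i))"

definition shift_space :: "(nat \<Rightarrow> 'a::finite) set \<Rightarrow> bool" where
  "shift_space X \<longleftrightarrow> X \<noteq> {}
     \<and> closedin (product_topology (\<lambda>_. discrete_topology (UNIV :: 'a set)) UNIV) X
     \<and> shift ` X \<subseteq> X"

definition lang :: "(nat \<Rightarrow> 'a) set \<Rightarrow> 'a list set" where
  "lang X = {w. \<exists>x\<in>X. \<exists>i. w = map x [i..<i + length w]}"

definition lang_n :: "(nat \<Rightarrow> 'a) set \<Rightarrow> nat \<Rightarrow> 'a list set" where
  "lang_n X n = {w \<in> lang X. length w = n}"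

definition dbar :: "(nat \<Rightarrow> 'a) \<Rightarrow> (nat \<Rightarrow> 'a) \<Rightarrow> ereal" where
  "dbar x y = limsup (\<lambda>n. ereal (real (card {j. j < n \<and> x j \<noteq> y j}) / real n))"

text \<open>Infinite concatenation w0 w1 w2 ... of a sequence of (nonempty) words.\<close>
definition concat_inf :: "(nat \<Rightarrow> 'a list) \<Rightarrow> nat \<Rightarrow> 'a" where
  "concat_inf ws n =
     (let k = (LEAST k. n < (\<Sum>j\<le>k. length (ws j)))
      in ws k ! (n - (\<Sum>j<k. length (ws j))))"

definition dbar_shadowing :: "(nat \<Rightarrow> 'a) set \<Rightarrow> bool" where
  "dbar_shadowing X \<longleftrightarrow>
     (\<forall>\<epsilon>>0. \<exists>N>0. \<forall>ws :: nat \<Rightarrow> 'a list.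
        (\<forall>j. ws j \<in> lang X \<and> length (ws j) \<ge> N) \<longrightarrow>
        (\<exists>x'\<in>X. dbar (concat_inf ws) x' < ereal \<epsilon>))"

definition markov_approx :: "(nat \<Rightarrow> 'a) set \<Rightarrow> nat \<Rightarrow> (nat \<Rightarrow> 'a) set" where
  "markov_approx X n = {x. \<forall>i. map x [i..<i + (n + 1)] \<in> lang_n X (n + 1)}"

definition top_mixing :: "(nat \<Rightarrow> 'a) set \<Rightarrow> bool" where
  "top_mixing Y \<longleftrightarrow>
     (\<forall>u\<in>lang Y. \<forall>w\<in>lang Y. \<exists>N. \<forall>n\<ge>N. \<exists>v. length v = n \<and> u @ v @ w \<in> lang Y)"

definition chain_mixing :: "(nat \<Rightarrow> 'a) set \<Rightarrow> bool" where
  "chain_mixing X \<longleftrightarrow> (\<exists>n0. \<forall>n\<ge>n0. top_mixing (markov_approx X n))"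

end

theory Submission
  imports Defs
begin

(* To see that the n-th Markov approximation is mixing it suffices to join any two allowed
   words a, b of length n + 1 by sequences of every large length whose (n + 1)-windows are all
   allowed.  Concatenate periodically three allowed blocks U, W, V of roughly equal length,
   U beginning with a and V ending with b (surjectivity of the shift lets an allowed word occur
   at any position).  A point x' of X that d-bar shadows this concatenation closely enough
   cannot, in every period, disagree somewhere in every (n + 1)-window of U and in every one
   of V: that would force a disagreement density of order 1/(n + 1).  So in some period x'
   agrees with U on one window and with V on another, and following U up to the first window,
   x' in between and V after the second one gives the connecting sequence; splicing along a
   common window of length n + 1 never creates a forbidden window. *)

lemma map_upt_in_lang: "x \<in> X \<Longrightarrow> map x [i..<i + k] \<in> lang X"
  unfolding lang_def by auto

lemma map_upt_eq_map_upt_iff: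
  "map f [i..<i + k] = map g [j..<j + k] \<longleftrightarrow> (\<forall>t<k. f (i + t) = g (j + t))"
  by (auto simp: list_eq_iff_nth_eq)

lemma langE:
  assumes "w \<in> lang X"
  obtains x i where "x \<in> X" "w = map x [i..<i + length w]"
  using assms unfolding lang_def by blast

lemma funpow_shift_apply: "(shift ^^ k) x i = x (i + k)"
  by (induction k arbitrary: i) (auto simp: shift_def)

lemma funpow_shift_image: "shift ` X = X \<Longrightarrow> (shift ^^ k) ` X = X"
proof (induction k)
  case (Suc k)
  then show ?case by (metis funpow_Suc_right image_comp)
qed simp

lemma lang_at_any_position:
  assumes "shift ` X = X" "w \<in> lang X"
  obtains z where "z \<in> X" "map z [k..<k + length w] = w"
proof -
  obtain x i where x: "x \<in> X" "w = map x [i..<i + length w]"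
    using langE[OF assms(2)] .
  have "(shift ^^ i) x \<in> (shift ^^ k) ` X"
    using funpow_shift_image[OF assms(1)] x(1) by auto
  then obtain z where "z \<in> X" "(shift ^^ i) x = (shift ^^ k) z" by auto
  then have "z \<in> X" "\<forall>t. z (k + t) = x (i + t)"
    by (metis funpow_shift_apply add.commute)+
  moreover from this have "map z [k..<k + length w] = map x [i..<i + length w]"
    by (intro nth_equalityI) auto
  ultimately show thesis using x(2) that by simp
qed

lemma mem_markov_approx_iff:
  "x \<in> markov_approx X n \<longleftrightarrow> (\<forall>i. map x [i..<i + (n + 1)] \<in> lang X)"
  by (simp add: markov_approx_def lang_n_def)

lemma subset_markov_approx: "X \<subseteq> markov_approx X n"
  using map_upt_in_lang[of _ X _ "n + 1"] by (auto simp: mem_markov_approx_iff)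

lemma markov_approx_splice:
  assumes x: "x \<in> markov_approx X n" and y: "y \<in> markov_approx X n"
    and agree: "\<forall>t\<le>n. x (i + t) = y (j + t)"
  obtains z where "z \<in> markov_approx X n" "\<forall>t\<le>i + n. z t = x t" "\<forall>t. z (i + t) = y (j + t)"
proof
  define z where "z t = (if t \<le> i + n then x t else y (t - i + j))" for t
  have z_right: "z t = y (t - i + j)" if "i \<le> t" for t
    using agree[rule_format, of "t - i"] that by (auto simp: z_def add.commute)
  show "z \<in> markov_approx X n"
    unfolding mem_markov_approx_iff
  proof
    fix s
    show "map z [s..<s + (n + 1)] \<in> lang X"
    proof (cases "s \<le> i")
      case True
      then have "map z [s..<s + (n + 1)] = map x [s..<s + (n + 1)]"
        by (intro map_cong) (auto simp: z_def)
      then show ?thesis using x by (simp only: mem_markov_approx_iff)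
    next
      case False
      then have "map z [s..<s + (n + 1)] = map y [s - i + j..<s - i + j + (n + 1)]"
        by (intro nth_equalityI) (auto simp: z_right algebra_simps simp del: upt_Suc)
      then show ?thesis using y by (simp only: mem_markov_approx_iff)
    qed
  qed
  show "\<forall>t\<le>i + n. z t = x t" by (simp add: z_def)
  show "\<forall>t. z (i + t) = y (j + t)" by (simp add: z_right add.commute)
qed

lemma markov_approx_splice_twice:
  assumes "x \<in> markov_approx X n" "y \<in> markov_approx X n" "z \<in> markov_approx X n"
    and xy: "\<forall>t\<le>n. x (i + t) = y (j + t)" and yz: "\<forall>t\<le>n. y (j + d + t) = z (l + t)"
  obtains f where "f \<in> markov_approx X n" "\<forall>t\<le>i + n. f t = x t" "\<forall>t. f (i + d + t) = z (l + t)"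
proof -
  obtain g where g: "g \<in> markov_approx X n" "\<forall>t\<le>i + n. g t = x t" "\<forall>t. g (i + t) = y (j + t)"
    using markov_approx_splice[OF assms(1,2) xy] .
  have "\<forall>t\<le>n. g (i + d + t) = z (l + t)"
    using g(3) yz by (metis add.assoc)
  then obtain f where "f \<in> markov_approx X n" "\<forall>t\<le>i + d + n. f t = g t"
    "\<forall>t. f (i + d + t) = z (l + t)"
    using markov_approx_splice[OF g(1) assms(3)] by blast
  with g(2) show thesis by (intro that) auto
qed

lemma card_ge_of_windows_hit:
  fixes D :: "nat set"
  assumes "K * (n + 1) \<le> L" "\<forall>p. p + n < L \<longrightarrow> (\<exists>d\<le>n. s + p + d \<in> D)"
  shows "K \<le> card (D \<inter> {s..<s + L})"
  using assms
proof (induction K arbitrary: s L)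
  case (Suc K)
  obtain d where d: "d \<le> n" "s + d \<in> D"
    using Suc.prems(2)[rule_format, of 0] Suc.prems(1) by auto
  have "K \<le> card (D \<inter> {s + (n + 1)..<s + (n + 1) + (L - (n + 1))})"
  proof (rule Suc.IH)
    show "K * (n + 1) \<le> L - (n + 1)" using Suc.prems(1) by simp
    show "\<forall>p. p + n < L - (n + 1) \<longrightarrow> (\<exists>d\<le>n. s + (n + 1) + p + d \<in> D)"
    proof (intro allI impI)
      fix p assume "p + n < L - (n + 1)"
      then have "(n + 1 + p) + n < L" by linarith
      then show "\<exists>d\<le>n. s + (n + 1) + p + d \<in> D"
        using Suc.prems(2)[rule_format, of "n + 1 + p"] by (simp add: algebra_simps)
    qed
  qed
  also have "\<dots> < card (insert (s + d) (D \<inter> {s + (n + 1)..<s + L}))"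
    using Suc.prems(1) d(1) by simp
  also have "\<dots> \<le> card (D \<inter> {s..<s + L})"
    using Suc.prems(1) d by (intro card_mono) auto
  finally show ?case by simp
qed simp

lemma card_mismatch_ge_of_periods:
  assumes "\<forall>q. K \<le> card ({j. x j \<noteq> y j} \<inter> {q * m..<q * m + m})"
  shows "Q * K \<le> card ({j. x j \<noteq> y j} \<inter> {..<Q * m})"
proof (induction Q)
  case (Suc Q)
  let ?D = "{j. x j \<noteq> y j}"
  have "?D \<inter> {..<Suc Q * m} = (?D \<inter> {..<Q * m}) \<union> (?D \<inter> {Q * m..<Q * m + m})"
    by auto
  then have "card (?D \<inter> {..<Suc Q * m}) = card (?D \<inter> {..<Q * m}) + card (?D \<inter> {Q * m..<Q * m + m})"
    by (simp add: card_Un_disjoint disjoint_iff)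
  moreover have "K \<le> card (?D \<inter> {Q * m..<Q * m + m})" using assms by blast
  moreover have "Suc Q * K = Q * K + K" by simp
  ultimately show ?case using Suc.IH by linarith
qed simp

lemma dbar_ge_of_periods:
  assumes "0 < m" "\<forall>q. K \<le> card ({j. x j \<noteq> y j} \<inter> {q * m..<q * m + m})"
  shows "ereal (real K / real (2 * m)) \<le> dbar x y"
proof -
  have "real K / real (2 * m) \<le> real (card {j. j < T \<and> x j \<noteq> y j}) / real T"
    if "m \<le> T" for T
  proof -
    define Q where "Q = T div m"
    have "1 \<le> Q" using that assms(1) div_le_mono[OF that, of m] by (simp add: Q_def)
    have "T < Q * m + m" using assms(1) unfolding Q_def
      by (metis add_less_cancel_left div_mult_mod_eq mod_less_divisor)
    moreover have "m \<le> Q * m" using \<open>1 \<le> Q\<close> by simp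
    ultimately have T_le: "T \<le> 2 * (Q * m)" by linarith
    have "Q * m \<le> T" unfolding Q_def by (rule div_times_less_eq_dividend)
    have "Q * K \<le> card ({j. x j \<noteq> y j} \<inter> {..<Q * m})"
      using card_mismatch_ge_of_periods[OF assms(2)] .
    also have "\<dots> \<le> card {j. j < T \<and> x j \<noteq> y j}"
      using \<open>Q * m \<le> T\<close> by (intro card_mono) auto
    finally have "Q * K * (2 * m) \<le> card {j. j < T \<and> x j \<noteq> y j} * (2 * m)"
      by (rule mult_le_mono1)
    moreover have "K * T \<le> Q * K * (2 * m)"
      using mult_le_mono2[OF T_le, of K] by (simp add: algebra_simps)
    ultimately have "K * T \<le> card {j. j < T \<and> x j \<noteq> y j} * (2 * m)"
      by (rule le_trans[rotated])
    then have "real K * real T \<le> real (card {j. j < T \<and> x j \<noteq> y j}) * real (2 * m)"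
      by (metis of_nat_le_iff of_nat_mult)
    then show ?thesis using assms(1) that by (simp add: field_simps)
  qed
  then have "\<forall>\<^sub>F T in sequentially.
      ereal (real K / real (2 * m)) \<le> ereal (real (card {j. j < T \<and> x j \<noteq> y j}) / real T)"
    by (auto simp: eventually_sequentially)
  then show ?thesis unfolding dbar_def by (intro le_Limsup) auto
qed

lemma agreeing_windows_in_some_period:
  assumes m: "0 < m" and close: "dbar x y < ereal (real K / real (2 * m))"
    and K: "K * (n + 1) \<le> L" and s: "s1 + L \<le> m" "s2 + L \<le> m"
  obtains q p1 p2 where "p1 + n < L" "p2 + n < L"
    "\<forall>t\<le>n. x (q * m + s1 + p1 + t) = y (q * m + s1 + p1 + t)"
    "\<forall>t\<le>n. x (q * m + s2 + p2 + t) = y (q * m + s2 + p2 + t)"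
proof -
  let ?D = "{j. x j \<noteq> y j}"
  let ?agree = "\<lambda>a. \<forall>t\<le>n. x (a + t) = y (a + t)"
  have "\<exists>q p1 p2. p1 + n < L \<and> p2 + n < L \<and> ?agree (q * m + s1 + p1) \<and> ?agree (q * m + s2 + p2)"
  proof (rule ccontr)
    assume none: "\<not> ?thesis"
    have "K \<le> card (?D \<inter> {q * m..<q * m + m})" for q
    proof -
      obtain s where "s + L \<le> m" "\<forall>p. p + n < L \<longrightarrow> \<not> ?agree (q * m + s + p)"
        using none s by blast
      then have "\<forall>p. p + n < L \<longrightarrow> (\<exists>d\<le>n. q * m + s + p + d \<in> ?D)"
        by (auto simp: add.assoc)
      then have "K \<le> card (?D \<inter> {q * m + s..<q * m + s + L})"
        using card_ge_of_windows_hit[OF K] by blast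
      also have "\<dots> \<le> card (?D \<inter> {q * m..<q * m + m})"
        using \<open>s + L \<le> m\<close> by (intro card_mono) auto
      finally show ?thesis .
    qed
    then have "ereal (real K / real (2 * m)) \<le> dbar x y"
      using dbar_ge_of_periods[OF m] by blast
    with close show False by simp
  qed
  with that show thesis by blast
qed

lemma concat_inf_block_nth:
  assumes "t < length (ws k)"
  shows "concat_inf ws ((\<Sum>j<k. length (ws j)) + t) = ws k ! t"
proof -
  let ?S = "\<lambda>k. \<Sum>j<k. length (ws j)"
  have "(LEAST k'. ?S k + t < (\<Sum>j\<le>k'. length (ws j))) = k"
  proof (rule Least_equality)
    show "?S k + t < (\<Sum>j\<le>k. length (ws j))"
      using assms by (simp add: lessThan_Suc_atMost[symmetric])
  next
    fix k' assume "?S k + t < (\<Sum>j\<le>k'. length (ws j))"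
    then have "?S k < ?S (Suc k')" by (simp add: lessThan_Suc_atMost[symmetric])
    then show "k \<le> k'"
      using sum_mono2[of "{..<k}" "{..<Suc k'}" "\<lambda>j. length (ws j)"] by fastforce
  qed
  then show ?thesis unfolding concat_inf_def Let_def by simp
qed

lemma concat_inf_cycle3_nth:
  assumes "t < length (U @ W @ V)"
  shows "concat_inf (\<lambda>j. [U, W, V] ! (j mod 3)) (q * length (U @ W @ V) + t) = (U @ W @ V) ! t"
proof -
  define ws where "ws = (\<lambda>j. [U, W, V] ! (j mod 3))"
  have ws: "ws (3 * q) = U" "ws (Suc (3 * q)) = W" "ws (Suc (Suc (3 * q))) = V" for q
  proof -
    have "Suc (3 * q) mod 3 = 1" "Suc (Suc (3 * q)) mod 3 = 2" by presburger+
    then show "ws (3 * q) = U" "ws (Suc (3 * q)) = W" "ws (Suc (Suc (3 * q))) = V"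
      by (simp_all add: ws_def)
  qed
  have sum_periods: "(\<Sum>j<3 * q. length (ws j)) = q * length (U @ W @ V)" for q
  proof (induction q)
    case (Suc q)
    have "3 * Suc q = Suc (Suc (Suc (3 * q)))" by simp
    then have "(\<Sum>j<3 * Suc q. length (ws j)) = (\<Sum>j<3 * q. length (ws j)) + length (U @ W @ V)"
      by (simp only: sum.lessThan_Suc ws) simp
    then show ?case using Suc.IH by simp
  qed simp
  consider "t < length U" | "length U \<le> t" "t < length U + length W"
    | "length U + length W \<le> t" by linarith
  then have "concat_inf ws (q * length (U @ W @ V) + t) = (U @ W @ V) ! t"
  proof cases
    case 1
    then show ?thesis
      using concat_inf_block_nth[of t ws "3 * q"] by (simp add: ws sum_periods nth_append)
  next
    case 2
    then have "t - length U < length W" by linarith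
    with 2 show ?thesis
      using concat_inf_block_nth[of "t - length U" ws "Suc (3 * q)"]
      by (simp add: ws sum_periods nth_append)
  next
    case 3
    then have "\<not> t - length U < length W" "t - length U - length W < length V"
      using assms by simp_all
    with 3 show ?thesis
      using assms concat_inf_block_nth[of "t - length U - length W" ws "Suc (Suc (3 * q))"]
      by (simp add: ws sum_periods nth_append add.assoc)
  qed
  then show ?thesis by (simp only: ws_def)
qed

lemma window_density_bound:
  assumes "n + 1 \<le> L" "0 < m" "m \<le> 3 * L + 2"
  shows "1 / (16 * (real n + 1)) \<le> real (L div (n + 1)) / real (2 * m)"
proof -
  define K where "K = L div (n + 1)"
  have "K * (n + 1) + L mod (n + 1) = L" unfolding K_def by (rule div_mult_mod_eq)
  moreover have "L mod (n + 1) < n + 1" by simp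
  moreover have "1 \<le> K" using div_le_mono[OF assms(1), of "n + 1"] unfolding K_def by simp
  then have "n + 1 \<le> K * (n + 1)" using mult_le_mono1[of 1 K "n + 1"] by simp
  ultimately have "2 * m \<le> 16 * (K * (n + 1))" using assms(3) by linarith
  then have "real (2 * m) \<le> real (16 * (K * (n + 1)))" by (rule of_nat_mono)
  then have "real m \<le> 8 * (real K * (real n + 1))" by (simp add: algebra_simps)
  with assms(2) show ?thesis unfolding K_def[symmetric] by (simp add: field_simps)
qed

lemma dbar_shadowing_agreeing_windows:
  fixes X :: "(nat \<Rightarrow> 'a) set"
  assumes "dbar_shadowing X"
  obtains N where "\<And>U W V. U \<in> lang X \<Longrightarrow> W \<in> lang X \<Longrightarrow> V \<in> lang X \<Longrightarrow>
    length V = length U \<Longrightarrow> length U \<le> length W \<Longrightarrow> length W \<le> length U + 2 \<Longrightarrow>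
    N \<le> length U \<Longrightarrow> \<exists>x'\<in>X. \<exists>q p1 p2. p1 + n < length U \<and> p2 + n < length U
      \<and> (\<forall>t\<le>n. U ! (p1 + t) = x' (q * length (U @ W @ V) + p1 + t))
      \<and> (\<forall>t\<le>n. x' (q * length (U @ W @ V) + length U + length W + p2 + t) = V ! (p2 + t))"
proof -
  define \<epsilon> where "\<epsilon> = 1 / (16 * (real n + 1))"
  \<comment> \<open>Small enough that a disagreement in every (n + 1)-window of U, or of V, in each period
    already has density at least \<epsilon> (lemma window_density_bound).\<close>
  have "0 < \<epsilon>" unfolding \<epsilon>_def by simp
  then obtain N where shadow: "\<And>ws :: nat \<Rightarrow> 'a list.
      \<forall>j. ws j \<in> lang X \<and> N \<le> length (ws j) \<Longrightarrow> \<exists>x'\<in>X. dbar (concat_inf ws) x' < ereal \<epsilon>"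
    using assms unfolding dbar_shadowing_def by blast
  show thesis
  proof (rule that[of "N + n + 1"])
    fix U W V assume lang: "U \<in> lang X" "W \<in> lang X" "V \<in> lang X"
      and len: "length V = length U" "length U \<le> length W" "length W \<le> length U + 2"
      and large: "N + n + 1 \<le> length U"
    define L where "L = length U"
    define m where "m = length (U @ W @ V)"
    define c where "c = concat_inf (\<lambda>j. [U, W, V] ! (j mod 3))"
    have "\<forall>j. [U, W, V] ! (j mod 3) \<in> lang X \<and> N \<le> length ([U, W, V] ! (j mod 3))"
    proof
      fix j
      have "[U, W, V] ! (j mod 3) \<in> {U, W, V}" using nth_mem[of "j mod 3" "[U, W, V]"] by simp
      then show "[U, W, V] ! (j mod 3) \<in> lang X \<and> N \<le> length ([U, W, V] ! (j mod 3))"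
        using lang len large by auto
    qed
    then have "\<exists>x'\<in>X. dbar c x' < ereal \<epsilon>" unfolding c_def by (rule shadow)
    then obtain x' where x': "x' \<in> X" "dbar c x' < ereal \<epsilon>" by blast
    have m: "m = 2 * L + length W" "m \<le> 3 * L + 2" "0 < m"
      using len large unfolding m_def L_def by auto
    have c_U: "c (q * m + t) = U ! t" if "t < L" for q t
      using concat_inf_cycle3_nth[of t U W V q] that by (simp add: c_def m_def L_def nth_append)
    have c_V: "c (q * m + (L + length W) + t) = V ! t" if "t < L" for q t
      using concat_inf_cycle3_nth[of "L + length W + t" U W V q] that len(1)
      by (simp add: c_def m_def L_def nth_append add.assoc)
    define K where "K = L div (n + 1)"
    have K: "K * (n + 1) \<le> L" unfolding K_def by (rule div_times_less_eq_dividend)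
    have "\<epsilon> \<le> real K / real (2 * m)"
      unfolding \<epsilon>_def K_def using large m(2,3) by (intro window_density_bound) (auto simp: L_def)
    with x'(2) have close: "dbar c x' < ereal (real K / real (2 * m))"
      by (meson ereal_less_eq(3) order.strict_trans2)
    obtain q p1 p2 where p: "p1 + n < L" "p2 + n < L"
      and agree1: "\<forall>t\<le>n. c (q * m + 0 + p1 + t) = x' (q * m + 0 + p1 + t)"
      and agree2: "\<forall>t\<le>n. c (q * m + (L + length W) + p2 + t) = x' (q * m + (L + length W) + p2 + t)"
    proof (rule agreeing_windows_in_some_period[OF m(3) close K(1)])
      show "0 + L \<le> m" "L + length W + L \<le> m" using m(1) by simp_all
    qed
    have "\<forall>t\<le>n. U ! (p1 + t) = x' (q * m + p1 + t)"
      using agree1 c_U p(1) by (auto simp: add.assoc)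
    moreover have "\<forall>t\<le>n. x' (q * m + L + length W + p2 + t) = V ! (p2 + t)"
      using agree2 c_V p(2) by (auto simp: add.assoc)
    ultimately show "\<exists>x'\<in>X. \<exists>q p1 p2. p1 + n < length U \<and> p2 + n < length U
      \<and> (\<forall>t\<le>n. U ! (p1 + t) = x' (q * length (U @ W @ V) + p1 + t))
      \<and> (\<forall>t\<le>n. x' (q * length (U @ W @ V) + length U + length W + p2 + t) = V ! (p2 + t))"
      using x'(1) p unfolding m_def L_def by blast
  qed
qed

lemma markov_approx_connects_words:
  fixes X :: "(nat \<Rightarrow> 'a) set"
  assumes shadowing: "dbar_shadowing X" and surj: "shift ` X = X"
    and a: "a \<in> lang X" "length a = n + 1" and b: "b \<in> lang X" "length b = n + 1"
  obtains M where "\<And>k. M \<le> k \<Longrightarrow>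
    \<exists>f\<in>markov_approx X n. map f [0..<n + 1] = a \<and> map f [k..<k + (n + 1)] = b"
proof -
  obtain N where windows: "\<And>U W V. U \<in> lang X \<Longrightarrow> W \<in> lang X \<Longrightarrow> V \<in> lang X \<Longrightarrow>
    length V = length U \<Longrightarrow> length U \<le> length W \<Longrightarrow> length W \<le> length U + 2 \<Longrightarrow>
    N \<le> length U \<Longrightarrow> \<exists>x'\<in>X. \<exists>q p1 p2. p1 + n < length U \<and> p2 + n < length U
      \<and> (\<forall>t\<le>n. U ! (p1 + t) = x' (q * length (U @ W @ V) + p1 + t))
      \<and> (\<forall>t\<le>n. x' (q * length (U @ W @ V) + length U + length W + p2 + t) = V ! (p2 + t))"
    using dbar_shadowing_agreeing_windows[OF shadowing] by blast
  have "\<exists>f\<in>markov_approx X n. map f [0..<n + 1] = a \<and> map f [k..<k + (n + 1)] = b"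
    if k: "3 * N \<le> k" for k
  proof -
    define L where "L = (k + (n + 1)) div 3"
    define r where "r = k + (n + 1) - 2 * L"
    have "3 * L + (k + (n + 1)) mod 3 = k + (n + 1)" "(k + (n + 1)) mod 3 < 3"
      unfolding L_def by simp_all
    then have m: "k + (n + 1) = 2 * L + r" "L \<le> r" "r \<le> L + 2" unfolding r_def by linarith+
    have "N \<le> L" using div_le_mono[of "3 * N" "k + (n + 1)" 3] k unfolding L_def by simp
    obtain A where A: "A \<in> X" "map A [0..<0 + length a] = a"
      using lang_at_any_position[OF surj a(1)] .
    obtain B where B: "B \<in> X" "map B [L - (n + 1)..<L - (n + 1) + length b] = b"
      using lang_at_any_position[OF surj b(1)] .
    obtain x' q p1 p2 where x': "x' \<in> X" and p: "p1 + n < L" "p2 + n < L"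
      and agree1: "\<forall>t\<le>n. map A [0..<L] ! (p1 + t) = x' (q * (L + r + L) + p1 + t)"
      and agree2: "\<forall>t\<le>n. x' (q * (L + r + L) + L + r + p2 + t) = map B [0..<L] ! (p2 + t)"
      using windows[of "map A [0..<L]" "map A [0..<r]" "map B [0..<L]"] \<open>N \<le> L\<close> m
        map_upt_in_lang[OF A(1), of 0, simplified] map_upt_in_lang[OF B(1), of 0, simplified]
      by (auto simp: add_ac)
    obtain f where f: "f \<in> markov_approx X n" "\<forall>t\<le>p1 + n. f t = A t"
      "\<forall>t. f (p1 + (L + r + p2 - p1) + t) = B (p2 + t)"
    proof (rule markov_approx_splice_twice)
      show "A \<in> markov_approx X n" "x' \<in> markov_approx X n" "B \<in> markov_approx X n"
        using A(1) x' B(1) subset_markov_approx by blast+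
      show "\<forall>t\<le>n. A (p1 + t) = x' (q * (L + r + L) + p1 + t)"
        using agree1 p(1) by simp
      show "\<forall>t\<le>n. x' (q * (L + r + L) + p1 + (L + r + p2 - p1) + t) = B (p2 + t)"
        using agree2 p by (simp add: add.assoc)
    qed
    have f_end: "f (k + t) = B (L - (n + 1) + t)" if "t \<le> n" for t
    proof -
      have "k + t = p1 + (L + r + p2 - p1) + (L - (n + 1) - p2 + t)"
        using p m(1) that by linarith
      then have "f (k + t) = B (p2 + (L - (n + 1) - p2 + t))" using f(3) by metis
      then show ?thesis using p(2) by simp
    qed
    have "map f [0..<0 + (n + 1)] = map A [0..<0 + (n + 1)]"
      unfolding map_upt_eq_map_upt_iff using f(2) by simp
    moreover have "map f [k..<k + (n + 1)] = map B [L - (n + 1)..<L - (n + 1) + (n + 1)]"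
      unfolding map_upt_eq_map_upt_iff using f_end by simp
    ultimately show ?thesis using f(1) A(2) B(2) a(2) b(2) by auto
  qed
  then show thesis using that by blast
qed

lemma top_mixing_markov_approxI:
  assumes connect: "\<And>a b. a \<in> lang_n X (n + 1) \<Longrightarrow> b \<in> lang_n X (n + 1) \<Longrightarrow>
    \<exists>M. \<forall>k\<ge>M. \<exists>f\<in>markov_approx X n. map f [0..<n + 1] = a \<and> map f [k..<k + (n + 1)] = b"
  shows "top_mixing (markov_approx X n)"
  unfolding top_mixing_def
proof (intro ballI)
  fix u w assume "u \<in> lang (markov_approx X n)" "w \<in> lang (markov_approx X n)"
  then obtain x i y j where x: "x \<in> markov_approx X n" "u = map x [i..<i + length u]"
    and y: "y \<in> markov_approx X n" "w = map y [j..<j + length w]"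
    by (metis langE)
  define l where "l = i + length u"
  define a where "a = map x [l..<l + (n + 1)]"
  define b where "b = map y [j..<j + (n + 1)]"
  have "a \<in> lang_n X (n + 1)" "b \<in> lang_n X (n + 1)"
    using x(1) y(1) by (simp_all add: a_def b_def markov_approx_def)
  then obtain M where M: "\<And>k. M \<le> k \<Longrightarrow>
      \<exists>f\<in>markov_approx X n. map f [0..<n + 1] = a \<and> map f [k..<k + (n + 1)] = b"
    using connect by blast
  have "\<exists>v. length v = k \<and> u @ v @ w \<in> lang (markov_approx X n)" if k: "M \<le> k" for k
  proof -
    obtain f where f: "f \<in> markov_approx X n" "map f [0..<0 + (n + 1)] = a"
      "map f [k..<k + (n + 1)] = b"
      using M[OF k] by auto
    obtain z where z: "z \<in> markov_approx X n" "\<forall>t\<le>l + n. z t = x t"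
      "\<forall>t. z (l + k + t) = y (j + t)"
    proof (rule markov_approx_splice_twice[OF x(1) f(1) y(1)])
      show "\<forall>t\<le>n. x (l + t) = f (0 + t)"
        using f(2) unfolding a_def map_upt_eq_map_upt_iff by auto
      show "\<forall>t\<le>n. f (0 + k + t) = y (j + t)"
        using f(3) unfolding b_def map_upt_eq_map_upt_iff by auto
    qed
    have "map z [i..<l] = map x [i..<l]"
      using z(2) by (intro map_cong) (auto simp: l_def)
    then have "u = map z [i..<l]" using x(2) by (simp add: l_def)
    moreover have "map z [l + k..<l + k + length w] = map y [j..<j + length w]"
      unfolding map_upt_eq_map_upt_iff using z(3) by simp
    then have "w = map z [l + k..<l + k + length w]" using y(2) by simp
    moreover have "[i..<l + k + length w] = [i..<l] @ [l..<l + k] @ [l + k..<l + k + length w]"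
      using upt_add_eq_append[of i l k] upt_add_eq_append[of i "l + k" "length w"]
      by (simp add: l_def)
    ultimately have "u @ map z [l..<l + k] @ w = map z [i..<i + (length u + k + length w)]"
      by (simp add: l_def add.assoc)
    then show ?thesis
      using map_upt_in_lang[OF z(1)] by (intro exI[of _ "map z [l..<l + k]"]) auto
  qed
  then show "\<exists>N. \<forall>k\<ge>N. \<exists>v. length v = k \<and> u @ v @ w \<in> lang (markov_approx X n)"
    by blast
qed

theorem mainTheorem6:
  fixes X :: "(nat \<Rightarrow> 'a::finite) set"
  assumes "shift_space X"
    and "dbar_shadowing X"
    and "shift ` X = X"
  shows "chain_mixing X"
  unfolding chain_mixing_def
proof (intro exI allI impI)
  \<comment> \<open>Every Markov approximation is mixing.\<close>
  fix n :: nat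
  show "top_mixing (markov_approx X n)"
  proof (rule top_mixing_markov_approxI)
    fix a b assume "a \<in> lang_n X (n + 1)" "b \<in> lang_n X (n + 1)"
    then show "\<exists>M. \<forall>k\<ge>M. \<exists>f\<in>markov_approx X n. map f [0..<n + 1] = a \<and> map f [k..<k + (n + 1)] = b"
      using markov_approx_connects_words[OF assms(2,3)] unfolding lang_n_def by blast
  qed
qed

end
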